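(* Let $u\in A^*$, $R\subseteq[0,|u|]$, $p=(u,R)$ and $p^*=(u,[0,|u|]\setminus R)$. Then for every word $w\in A^*$, $$\binom{w}{p}=\sum_{v\in A^*}(-1)^{|v|-|u|}\binom{v}{p^*}\binom{w}{v}$$ (the sum has finitely many nonzero terms).
   Context: $A$ is a finite alphabet, $A^*$ the set of finite words over $A$, $|w|$ the length, $[0,k]=\{0,1,\dots,k\}$. For words $u=a_1\cdots a_k$, $v=b_1\cdots b_n$, $\binom{v}{u}$ is the number of order-preserving injections $\varphi:[k]\to[n]$ with $a_i=b_{\varphi(i)}$ for all $i$. For $R\subseteq[0,k]$, an occurrence of $p=(u,R)$ in $v$ is such an injection satisfying additionally $\varphi(i+1)=\varphi(i)+1$ for all $i\in R$, with conventions $\varphi(0)=0$ and $\varphi(k+1)=n+1$; $\binom{v}{p}=\binom{v}{u,R}$ is the number of occurrences of $p$ in $v$. (So $R=\emptyset$ gives $\binom{v}{u}$, $R=[1,k-1]$ counts factor occurrences, $R=[0,k]$ gives $[u=v]$.) *)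

theory Defs
  imports Main "HOL-Library.FuncSet"
begin

text \<open>Words are lists; positions are 1-based as in the paper.  An order-preserving
map phi from [1,k] to [1,n] is represented as an extensional function on {1..k}.\<close>

definition ext_occ :: "(nat \<Rightarrow> nat) \<Rightarrow> nat \<Rightarrow> nat \<Rightarrow> nat \<Rightarrow> nat" where
  "ext_occ \<phi> k n i = (if i = 0 then 0 else if i = k + 1 then n + 1 else \<phi> i)"

definition occurrences :: "'a list \<Rightarrow> nat set \<Rightarrow> 'a list \<Rightarrow> (nat \<Rightarrow> nat) set" where
  "occurrences u R v =
     {\<phi> \<in> {1..length u} \<rightarrow>\<^sub>E {1..length v}.
        (\<forall>i\<in>{1..length u}. \<forall>j\<in>{1..length u}. i < j \<longrightarrow> \<phi> i < \<phi> j) \<and>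
        (\<forall>i\<in>{1..length u}. u ! (i - 1) = v ! (\<phi> i - 1)) \<and>
        (\<forall>i\<in>R. ext_occ \<phi> (length u) (length v) (i + 1)
                 = ext_occ \<phi> (length u) (length v) i + 1)}"

definition pbinom :: "'a list \<Rightarrow> 'a list \<Rightarrow> nat set \<Rightarrow> nat" where
  "pbinom v u R = card (occurrences u R v)"

definition wbinom :: "'a list \<Rightarrow> 'a list \<Rightarrow> nat" where
  "wbinom v u = pbinom v u {}"

end

theory Submission
  imports Defs
begin

(* Counting the position sets T of w that spell v, the right-hand side becomes
   Sum_T (-1)^(|T|-|u|) * #occ(p*, w|T). An occurrence of p* in the subword w|T is the same as
   a plain occurrence phi of u in w lying inside T whose gaps indexed by [0,|u|] - R contain no
   point of T. Exchanging the sums, phi contributes Sum_S (-1)^|S| over the subsets S of the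
   union of its gaps indexed by R: this is 1 if all these gaps are empty, i.e. if phi is an
   occurrence of p, and 0 otherwise. *)

definition incr_maps :: "nat \<Rightarrow> nat \<Rightarrow> (nat \<Rightarrow> nat) set" where
  "incr_maps k n = {\<phi> \<in> {1..k} \<rightarrow>\<^sub>E {1..n}. strict_mono_on {1..k} \<phi>}"

lemma occurrences_iff:
  "\<phi> \<in> occurrences u R v \<longleftrightarrow> \<phi> \<in> incr_maps (length u) (length v) \<and>
     (\<forall>i\<in>{1..length u}. u ! (i - 1) = v ! (\<phi> i - 1)) \<and>
     (\<forall>i\<in>R. ext_occ \<phi> (length u) (length v) (i + 1) = ext_occ \<phi> (length u) (length v) i + 1)"
  unfolding occurrences_def incr_maps_def strict_mono_on_def by blast

lemma finite_incr_maps: "finite (incr_maps k n)"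
  by (rule finite_subset[of _ "{1..k} \<rightarrow>\<^sub>E {1..n}"]) (auto simp: incr_maps_def finite_PiE)

lemma finite_occurrences: "finite (occurrences u R v)"
  using finite_incr_maps by (rule finite_subset[rotated]) (auto simp: occurrences_iff)

lemma incr_maps_strict_mono: "\<phi> \<in> incr_maps k n \<Longrightarrow> strict_mono_on {1..k} \<phi>"
  by (simp add: incr_maps_def)

lemma incr_maps_range:
  "\<phi> \<in> incr_maps k n \<Longrightarrow> i \<in> {1..k} \<Longrightarrow> \<phi> i \<in> {1..n}"
  by (auto simp: incr_maps_def)

lemma ext_occ_strict_mono:
  assumes "\<phi> \<in> incr_maps k n"
  shows "strict_mono_on {0..k + 1} (ext_occ \<phi> k n)"
proof (rule strict_mono_onI)
  fix i j assume "i \<in> {0..k + 1}" "j \<in> {0..k + 1}" "i < j"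
  then consider "i = 0" "j = k + 1" | "i = 0" "j \<in> {1..k}" | "i \<in> {1..k}" "j = k + 1"
    | "i \<in> {1..k}" "j \<in> {1..k}"
    by fastforce
  then show "ext_occ \<phi> k n i < ext_occ \<phi> k n j"
    using assms incr_maps_range[OF assms, of i] incr_maps_range[OF assms, of j] \<open>i < j\<close>
    by cases (auto simp: ext_occ_def incr_maps_def strict_mono_on_def)
qed

lemma ext_occ_le:
  assumes "\<phi> \<in> incr_maps k n" "i \<le> k + 1"
  shows "ext_occ \<phi> k n i \<le> n + 1"
  using strict_mono_on_less_eq[OF ext_occ_strict_mono[OF assms(1)], of i "k + 1"] assms(2)
  by (simp add: ext_occ_def)

lemma ext_occ_comp:
  assumes "\<psi> \<in> incr_maps k m" "i \<le> k + 1"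
  shows "ext_occ (restrict (\<chi> \<circ> \<psi>) {1..k}) k n i = ext_occ \<chi> m n (ext_occ \<psi> k m i)"
proof -
  have "\<psi> i \<in> {1..m}" if "i \<in> {1..k}"
    using incr_maps_range[OF assms(1) that] .
  then show ?thesis
    using assms(2) unfolding ext_occ_def by (cases "i = 0"; cases "i = k + 1") auto
qed

definition gap :: "(nat \<Rightarrow> nat) \<Rightarrow> nat \<Rightarrow> nat \<Rightarrow> nat \<Rightarrow> nat set" where
  "gap \<phi> k n i = {ext_occ \<phi> k n i<..<ext_occ \<phi> k n (i + 1)}"

lemma between_disjoint_image_iff:
  assumes "\<chi> \<in> incr_maps m n" "a < b" "b \<le> m + 1"
  shows "{ext_occ \<chi> m n a<..<ext_occ \<chi> m n b} \<inter> \<chi> ` {1..m} = {} \<longleftrightarrow> b = a + 1"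
proof -
  have "\<chi> j \<in> {ext_occ \<chi> m n a<..<ext_occ \<chi> m n b} \<longleftrightarrow> a < j \<and> j < b" if "j \<in> {1..m}" for j
  proof -
    have "\<chi> j = ext_occ \<chi> m n j"
      using that by (simp add: ext_occ_def)
    then show ?thesis
      using strict_mono_on_less[OF ext_occ_strict_mono[OF assms(1)]] that assms(2,3) by auto
  qed
  then have "{ext_occ \<chi> m n a<..<ext_occ \<chi> m n b} \<inter> \<chi> ` {1..m} = {} \<longleftrightarrow>
             \<not> (\<exists>j\<in>{1..m}. a < j \<and> j < b)"
    by blast
  also have "\<dots> \<longleftrightarrow> b = a + 1"
    using assms(2,3) by (auto intro: bexI[of _ "a + 1"])
  finally show ?thesis .
qed

lemma gap_disjoint_image:
  assumes "\<phi> \<in> incr_maps k n" "i \<le> k"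
  shows "gap \<phi> k n i \<inter> \<phi> ` {1..k} = {}"
  using between_disjoint_image_iff[OF assms(1), of i "i + 1"] assms(2) by (simp add: gap_def)

lemma gap_comp_disjoint_iff:
  assumes "\<chi> \<in> incr_maps m n" "\<psi> \<in> incr_maps k m" "i \<le> k"
  shows "gap (restrict (\<chi> \<circ> \<psi>) {1..k}) k n i \<inter> \<chi> ` {1..m} = {} \<longleftrightarrow>
         ext_occ \<psi> k m (i + 1) = ext_occ \<psi> k m i + 1"
proof -
  have "ext_occ \<psi> k m i < ext_occ \<psi> k m (i + 1)"
    using strict_mono_onD[OF ext_occ_strict_mono[OF assms(2)]] assms(3) by simp
  moreover have "ext_occ \<psi> k m (i + 1) \<le> m + 1"
    using ext_occ_le[OF assms(2)] assms(3) by simp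
  ultimately show ?thesis
    using between_disjoint_image_iff[OF assms(1)] ext_occ_comp[OF assms(2)] assms(3)
    by (simp add: gap_def)
qed

lemma gap_eq_empty_iff:
  assumes "\<phi> \<in> incr_maps k n" "i \<le> k"
  shows "gap \<phi> k n i = {} \<longleftrightarrow> ext_occ \<phi> k n (i + 1) = ext_occ \<phi> k n i + 1"
proof -
  have "ext_occ \<phi> k n i < ext_occ \<phi> k n (i + 1)"
    using strict_mono_onD[OF ext_occ_strict_mono[OF assms(1)]] assms(2) by simp
  moreover have "gap \<phi> k n i = {} \<longleftrightarrow> ext_occ \<phi> k n (i + 1) \<le> ext_occ \<phi> k n i + 1"
    unfolding gap_def by (subst card_0_eq[symmetric]) auto
  ultimately show ?thesis
    by linarith
qed

lemma gap_subset:
  assumes "\<phi> \<in> incr_maps k n" "i \<le> k"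
  shows "gap \<phi> k n i \<subseteq> {1..n}"
  using ext_occ_le[OF assms(1), of "i + 1"] assms(2) by (auto simp: gap_def)

lemma gaps_disjoint:
  assumes "\<phi> \<in> incr_maps k n" "i \<le> k" "j \<le> k" "i \<noteq> j"
  shows "gap \<phi> k n i \<inter> gap \<phi> k n j = {}"
proof -
  have "gap \<phi> k n i \<inter> gap \<phi> k n j = {}" if "i < j" "j \<le> k" for i j
  proof -
    have "ext_occ \<phi> k n (i + 1) \<le> ext_occ \<phi> k n j"
      using strict_mono_on_less_eq[OF ext_occ_strict_mono[OF assms(1)], of "i + 1" j] that by simp
    then show ?thesis
      by (auto simp: gap_def)
  qed
  then show ?thesis
    using assms(2-4) by (metis Int_commute linorder_neqE_nat)
qed

lemma complement_image_eq_gaps: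
  assumes "\<phi> \<in> incr_maps k n"
  shows "{1..n} - \<phi> ` {1..k} = (\<Union>i\<le>k. gap \<phi> k n i)"
proof
  show "(\<Union>i\<le>k. gap \<phi> k n i) \<subseteq> {1..n} - \<phi> ` {1..k}"
    using gap_subset[OF assms] gap_disjoint_image[OF assms] by blast
  show "{1..n} - \<phi> ` {1..k} \<subseteq> (\<Union>i\<le>k. gap \<phi> k n i)"
  proof
    fix x assume x: "x \<in> {1..n} - \<phi> ` {1..k}"
    have "x < ext_occ \<phi> k n (k + 1)" "\<not> x < ext_occ \<phi> k n 0"
      using x by (auto simp: ext_occ_def)
    then obtain i where i: "i < k + 1" "\<not> x < ext_occ \<phi> k n i" "x < ext_occ \<phi> k n (i + 1)"
      using ex_least_nat_less[of "\<lambda>j. x < ext_occ \<phi> k n j" "k + 1"] by auto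
    moreover have "ext_occ \<phi> k n i \<noteq> x"
      using x i(1) by (auto simp: ext_occ_def)
    ultimately show "x \<in> (\<Union>i\<le>k. gap \<phi> k n i)"
      unfolding gap_def by (intro UN_I[of i]) auto
  qed
qed

definition subword :: "'a list \<Rightarrow> nat set \<Rightarrow> 'a list" where
  "subword w T = map (\<lambda>j. w ! (j - 1)) (sorted_list_of_set T)"

lemma length_subword [simp]: "length (subword w T) = card T"
  by (simp add: subword_def)

lemma sorted_list_of_set_image_strict_mono:
  assumes "strict_mono_on {1..m} \<chi>"
  shows "sorted_list_of_set (\<chi> ` {1..m}) = map \<chi> [1..<m + 1]"
proof -
  have "sorted_wrt (<) (map \<chi> [1..<m + 1])"
    using assms by (auto simp: sorted_wrt_iff_nth_less strict_mono_on_def simp del: upt_Suc)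
  moreover have "length (map \<chi> [1..<m + 1]) = card (\<chi> ` {1..m})"
    using card_image[OF strict_mono_on_imp_inj_on[OF assms]] by simp
  ultimately show ?thesis
    using sorted_list_of_set_unique[of "\<chi> ` {1..m}" "map \<chi> [1..<m + 1]"] by auto
qed

lemma subword_image:
  assumes "strict_mono_on {1..m} \<chi>"
  shows "subword w (\<chi> ` {1..m}) = map (\<lambda>j. w ! (\<chi> j - 1)) [1..<m + 1]"
  unfolding subword_def sorted_list_of_set_image_strict_mono[OF assms] by simp

lemma ex_incr_map_onto:
  assumes "T \<subseteq> {1..n}"
  shows "\<exists>\<chi>\<in>incr_maps (card T) n. \<chi> ` {1..card T} = T"
proof
  let ?m = "card T" and ?xs = "sorted_list_of_set T"
  define \<chi> where "\<chi> = restrict (\<lambda>j. ?xs ! (j - 1)) {1..?m}"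
  have fin: "finite T"
    using assms finite_subset by auto
  have "\<chi> ` {1..?m} = (\<lambda>p. ?xs ! p) ` {..<length ?xs}"
    unfolding \<chi>_def image_Suc_lessThan[symmetric] image_image by simp
  also have "\<dots> = set ?xs"
    by (auto simp: in_set_conv_nth)
  finally show img: "\<chi> ` {1..?m} = T"
    using fin by simp
  have "strict_mono_on {1..?m} \<chi>"
    using strict_sorted_list_of_set[of T]
    by (auto simp: \<chi>_def strict_mono_on_def sorted_wrt_iff_nth_less)
  then show "\<chi> \<in> incr_maps ?m n"
    using img assms by (auto simp: incr_maps_def \<chi>_def)
qed

lemma bij_betw_image_incr_maps:
  "bij_betw (\<lambda>\<chi>. \<chi> ` {1..m}) (incr_maps m n) {T \<in> Pow {1..n}. card T = m}"
proof (rule bij_betw_imageI)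
  show "inj_on (\<lambda>\<chi>. \<chi> ` {1..m}) (incr_maps m n)"
  proof (rule inj_onI)
    fix \<chi> \<chi>' assume \<chi>: "\<chi> \<in> incr_maps m n" and \<chi>': "\<chi>' \<in> incr_maps m n"
      and eq: "\<chi> ` {1..m} = \<chi>' ` {1..m}"
    have "map \<chi> [1..<m + 1] = map \<chi>' [1..<m + 1]"
      using eq sorted_list_of_set_image_strict_mono[OF incr_maps_strict_mono[OF \<chi>]]
        sorted_list_of_set_image_strict_mono[OF incr_maps_strict_mono[OF \<chi>']]
      by (simp only:)
    then have "\<chi> j = \<chi>' j" if "j \<in> {1..m}" for j
      using that by (simp del: upt_Suc)
    then show "\<chi> = \<chi>'"
      using \<chi> \<chi>' by (intro extensionalityI[of _ "{1..m}"]) (auto simp: incr_maps_def PiE_iff)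
  qed
  show "(\<lambda>\<chi>. \<chi> ` {1..m}) ` incr_maps m n = {T \<in> Pow {1..n}. card T = m}"
  proof (intro equalityI subsetI)
    fix T assume "T \<in> (\<lambda>\<chi>. \<chi> ` {1..m}) ` incr_maps m n"
    then obtain \<chi> where "\<chi> \<in> incr_maps m n" "T = \<chi> ` {1..m}"
      by blast
    then show "T \<in> {T \<in> Pow {1..n}. card T = m}"
      using card_image[OF strict_mono_on_imp_inj_on] by (auto simp: incr_maps_def)
  next
    fix T assume T: "T \<in> {T \<in> Pow {1..n}. card T = m}"
    then obtain \<chi> where "\<chi> \<in> incr_maps m n" "\<chi> ` {1..m} = T"
      using ex_incr_map_onto[of T n] by auto
    then show "T \<in> (\<lambda>\<chi>. \<chi> ` {1..m}) ` incr_maps m n"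
      by blast
  qed
qed

lemma nth_eq_iff_eq_map_upt:
  assumes "length v = m"
  shows "(\<forall>i\<in>{1..m}. v ! (i - 1) = f i) \<longleftrightarrow> v = map f [1..<m + 1]"
proof -
  have "(\<forall>i\<in>{1..m}. v ! (i - 1) = f i) \<longleftrightarrow> (\<forall>p<m. v ! p = f (Suc p))"
  proof (intro iffI allI impI ballI)
    fix p assume "\<forall>i\<in>{1..m}. v ! (i - 1) = f i" "p < m"
    then show "v ! p = f (Suc p)"
      by (drule_tac bspec[of _ _ "Suc p"]) auto
  next
    fix i assume "\<forall>p<m. v ! p = f (Suc p)" "i \<in> {1..m}"
    then show "v ! (i - 1) = f i"
      by (drule_tac spec[of _ "i - 1"]) auto
  qed
  then show ?thesis
    using assms by (auto simp: list_eq_iff_nth_eq simp del: upt_Suc)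
qed

lemma wbinom_eq_card_positions:
  "wbinom w v = card {T \<in> Pow {1..length w}. subword w T = v}"
proof -
  let ?m = "length v" and ?n = "length w"
  have "\<chi> \<in> occurrences v {} w \<longleftrightarrow> \<chi> \<in> incr_maps ?m ?n \<and> subword w (\<chi> ` {1..?m}) = v" for \<chi>
  proof (cases "\<chi> \<in> incr_maps ?m ?n")
    case True
    have "(\<forall>i\<in>{1..?m}. v ! (i - 1) = w ! (\<chi> i - 1)) \<longleftrightarrow> subword w (\<chi> ` {1..?m}) = v"
      unfolding subword_image[OF incr_maps_strict_mono[OF True]] nth_eq_iff_eq_map_upt[OF refl]
      by (rule eq_commute)
    then show ?thesis
      unfolding occurrences_iff by simp
  qed (simp add: occurrences_iff)
  then have "occurrences v {} w = {\<chi> \<in> incr_maps ?m ?n. subword w (\<chi> ` {1..?m}) = v}"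
    by blast
  moreover have "bij_betw (\<lambda>\<chi>. \<chi> ` {1..?m}) {\<chi> \<in> incr_maps ?m ?n. subword w (\<chi> ` {1..?m}) = v}
                   {T \<in> {T \<in> Pow {1..?n}. card T = ?m}. subword w T = v}"
    by (rule bij_betw_Collect[OF bij_betw_image_incr_maps]) simp
  moreover have "{T \<in> {T \<in> Pow {1..?n}. card T = ?m}. subword w T = v} = {T \<in> Pow {1..?n}. subword w T = v}"
    by (auto simp flip: length_subword)
  ultimately show ?thesis
    unfolding wbinom_def pbinom_def using bij_betw_same_card by fastforce
qed

lemma length_le_if_wbinom_nonzero:
  assumes "wbinom w v \<noteq> 0"
  shows "length v \<le> length w"
proof -
  have "{T \<in> Pow {1..length w}. subword w T = v} \<noteq> {}"
    using assms unfolding wbinom_eq_card_positions by (metis card.empty)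
  then obtain T where "T \<subseteq> {1..length w}" "subword w T = v"
    by blast
  then show ?thesis
    using card_mono[of "{1..length w}" T] by auto
qed

lemma incr_maps_comp:
  assumes \<chi>: "\<chi> \<in> incr_maps m n" and \<psi>: "\<psi> \<in> incr_maps k m"
  shows "restrict (\<chi> \<circ> \<psi>) {1..k} \<in> incr_maps k n"
proof -
  have "strict_mono_on {1..k} (restrict (\<chi> \<circ> \<psi>) {1..k})"
    using strict_mono_onD[OF incr_maps_strict_mono[OF \<chi>]]
      strict_mono_onD[OF incr_maps_strict_mono[OF \<psi>]] incr_maps_range[OF \<psi>]
    by (intro strict_mono_onI) auto
  then show ?thesis
    using incr_maps_range[OF \<chi>] incr_maps_range[OF \<psi>] by (auto simp: incr_maps_def)
qed

lemma incr_maps_inv_comp: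
  assumes \<chi>: "\<chi> \<in> incr_maps m n" and \<phi>: "\<phi> \<in> incr_maps k n" and img: "\<phi> ` {1..k} \<subseteq> \<chi> ` {1..m}"
  shows "restrict (inv_into {1..m} \<chi> \<circ> \<phi>) {1..k} \<in> incr_maps k m"
proof -
  let ?\<psi> = "restrict (inv_into {1..m} \<chi> \<circ> \<phi>) {1..k}"
  have "\<phi> i \<in> \<chi> ` {1..m}" if "i \<in> {1..k}" for i
    using img that by blast
  then have inv_in: "inv_into {1..m} \<chi> (\<phi> i) \<in> {1..m}"
    and f_inv: "\<chi> (inv_into {1..m} \<chi> (\<phi> i)) = \<phi> i" if "i \<in> {1..k}" for i
    using that by (blast intro: inv_into_into f_inv_into_f)+
  have "strict_mono_on {1..k} ?\<psi>"
  proof (rule strict_mono_onI)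
    fix i j assume i: "i \<in> {1..k}" and j: "j \<in> {1..k}" and "i < j"
    then have "\<phi> i < \<phi> j"
      using strict_mono_onD[OF incr_maps_strict_mono[OF \<phi>]] by blast
    then show "?\<psi> i < ?\<psi> j"
      using strict_mono_on_less[OF incr_maps_strict_mono[OF \<chi>] inv_in[OF i] inv_in[OF j]]
        f_inv[OF i] f_inv[OF j] i j
      by simp
  qed
  then show ?thesis
    using inv_in by (auto simp: incr_maps_def)
qed

lemma bij_betw_comp_incr_maps:
  assumes \<chi>: "\<chi> \<in> incr_maps m n"
  shows "bij_betw (\<lambda>\<psi>. restrict (\<chi> \<circ> \<psi>) {1..k}) (incr_maps k m)
           {\<phi> \<in> incr_maps k n. \<phi> ` {1..k} \<subseteq> \<chi> ` {1..m}}"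
proof (rule bij_betwI)
  let ?g = "\<lambda>\<phi>. restrict (inv_into {1..m} \<chi> \<circ> \<phi>) {1..k}"
  show "(\<lambda>\<psi>. restrict (\<chi> \<circ> \<psi>) {1..k}) \<in> incr_maps k m \<rightarrow> {\<phi> \<in> incr_maps k n. \<phi> ` {1..k} \<subseteq> \<chi> ` {1..m}}"
    using incr_maps_comp[OF \<chi>] incr_maps_range by fastforce
  show "?g \<in> {\<phi> \<in> incr_maps k n. \<phi> ` {1..k} \<subseteq> \<chi> ` {1..m}} \<rightarrow> incr_maps k m"
    using incr_maps_inv_comp[OF \<chi>] by blast
  show "?g (restrict (\<chi> \<circ> \<psi>) {1..k}) = \<psi>" if "\<psi> \<in> incr_maps k m" for \<psi>
    using that incr_maps_range[OF that] inv_into_f_f[OF strict_mono_on_imp_inj_on[OF incr_maps_strict_mono[OF \<chi>]]]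
    by (intro extensionalityI[of _ "{1..k}"]) (auto simp: incr_maps_def PiE_iff)
  show "restrict (\<chi> \<circ> ?g \<phi>) {1..k} = \<phi>"
    if \<phi>: "\<phi> \<in> {\<phi> \<in> incr_maps k n. \<phi> ` {1..k} \<subseteq> \<chi> ` {1..m}}" for \<phi>
  proof (rule extensionalityI[of _ "{1..k}"])
    show "\<phi> \<in> extensional {1..k}"
      using \<phi> by (auto simp: incr_maps_def PiE_iff)
    fix i assume "i \<in> {1..k}"
    then have "\<phi> i \<in> \<chi> ` {1..m}"
      using \<phi> by blast
    then show "restrict (\<chi> \<circ> ?g \<phi>) {1..k} i = \<phi> i"
      using \<open>i \<in> {1..k}\<close> by (simp add: f_inv_into_f)
  qed simp
qed

definition occurrences_within :: "'a list \<Rightarrow> nat set \<Rightarrow> 'a list \<Rightarrow> nat set \<Rightarrow> (nat \<Rightarrow> nat) set" where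
  "occurrences_within u R w T = {\<phi> \<in> occurrences u {} w. \<phi> ` {1..length u} \<subseteq> T \<and>
     (\<forall>i\<in>R. gap \<phi> (length u) (length w) i \<inter> T = {})}"

lemma pbinom_subword:
  assumes R: "R \<subseteq> {0..length u}" and T: "T \<subseteq> {1..length w}"
  shows "pbinom (subword w T) u R = card (occurrences_within u R w T)"
proof -
  let ?k = "length u" and ?m = "card T" and ?n = "length w" and ?v = "subword w T"
  \<comment> \<open>\<chi> enumerates T increasingly; occurrences in the subword are transported along it.\<close>
  obtain \<chi> where \<chi>: "\<chi> \<in> incr_maps ?m ?n" and img: "\<chi> ` {1..?m} = T"
    using ex_incr_map_onto[OF T] by blast
  have v_nth: "?v ! (j - 1) = w ! (\<chi> j - 1)" if "j \<in> {1..?m}" for j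
    using that subword_image[OF incr_maps_strict_mono[OF \<chi>], of w, unfolded img]
    by (auto simp del: upt_Suc)
  let ?h = "\<lambda>\<psi>. restrict (\<chi> \<circ> \<psi>) {1..?k}"
  have "?h \<psi> \<in> occurrences_within u R w T \<longleftrightarrow> \<psi> \<in> occurrences u R ?v"
    if \<psi>: "\<psi> \<in> incr_maps ?k ?m" for \<psi>
  proof -
    have "?h \<psi> \<in> incr_maps ?k ?n" "?h \<psi> ` {1..?k} \<subseteq> T"
      using bij_betw_apply[OF bij_betw_comp_incr_maps[OF \<chi>] \<psi>, unfolded img] by auto
    moreover have "w ! (?h \<psi> i - 1) = ?v ! (\<psi> i - 1)" if "i \<in> {1..?k}" for i
      using v_nth[OF incr_maps_range[OF \<psi> that]] that by simp
    moreover have "gap (?h \<psi>) ?k ?n i \<inter> T = {} \<longleftrightarrow>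
                   ext_occ \<psi> ?k ?m (i + 1) = ext_occ \<psi> ?k ?m i + 1" if "i \<in> R" for i
    proof -
      have "i \<le> ?k"
        using R that by auto
      then show ?thesis
        using gap_comp_disjoint_iff[OF \<chi> \<psi>, unfolded img] by simp
    qed
    ultimately show ?thesis
      using \<psi> by (simp add: occurrences_within_def occurrences_iff)
  qed
  then have "bij_betw ?h {\<psi> \<in> incr_maps ?k ?m. \<psi> \<in> occurrences u R ?v}
     {\<phi> \<in> {\<phi> \<in> incr_maps ?k ?n. \<phi> ` {1..?k} \<subseteq> T}. \<phi> \<in> occurrences_within u R w T}"
    by (intro bij_betw_Collect[OF bij_betw_comp_incr_maps[OF \<chi>, unfolded img]])
  moreover have "{\<psi> \<in> incr_maps ?k ?m. \<psi> \<in> occurrences u R ?v} = occurrences u R ?v"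
    by (auto simp: occurrences_iff)
  moreover have "{\<phi> \<in> {\<phi> \<in> incr_maps ?k ?n. \<phi> ` {1..?k} \<subseteq> T}. \<phi> \<in> occurrences_within u R w T}
                 = occurrences_within u R w T"
    by (auto simp: occurrences_within_def occurrences_iff)
  ultimately show ?thesis
    unfolding pbinom_def by (metis bij_betw_same_card)
qed

lemma sum_Pow_neg_one_card:
  assumes "finite X"
  shows "(\<Sum>S\<in>Pow X. (-1::int) ^ card S) = (if X = {} then 1 else 0)"
proof (cases "X = {}")
  case False
  then have "card {S. S \<subseteq> X \<and> {} \<subseteq> S \<and> even (card S)} = card {S. S \<subseteq> X \<and> {} \<subseteq> S \<and> odd (card S)}"
    using assms by (intro card_subsupersets_even_odd) auto
  then show ?thesis
    using assms False by (simp add: Pow_def sum_alternating_cancels)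
qed simp

lemma gaps_subset_complement_image:
  assumes "\<phi> \<in> incr_maps k n" "R \<subseteq> {0..k}"
  shows "(\<Union>i\<in>R. gap \<phi> k n i) \<subseteq> {1..n} - \<phi> ` {1..k}"
  using assms(2) complement_image_eq_gaps[OF assms(1)] by (auto simp: atLeast0AtMost)

lemma bij_betw_positions_containing_occurrence:
  assumes R: "R \<subseteq> {0..length u}" and \<phi>: "\<phi> \<in> occurrences u {} w"
  shows "bij_betw (\<lambda>S. \<phi> ` {1..length u} \<union> S) (Pow (\<Union>i\<in>R. gap \<phi> (length u) (length w) i))
           {T \<in> Pow {1..length w}. \<phi> \<in> occurrences_within u ({0..length u} - R) w T}"
proof -
  let ?k = "length u" and ?n = "length w"
  let ?I = "\<phi> ` {1..?k}" and ?G = "\<Union>i\<in>R. gap \<phi> ?k ?n i"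
  have inc: "\<phi> \<in> incr_maps ?k ?n"
    using \<phi> by (simp add: occurrences_iff)
  have G_sub: "?G \<subseteq> {1..?n} - ?I"
    using gaps_subset_complement_image[OF inc R] .
  have G_avoid: "gap \<phi> ?k ?n j \<inter> ?G = {}" if "j \<in> {0..?k} - R" for j
    using gaps_disjoint[OF inc] R that by fastforce
  show ?thesis
  proof (rule bij_betw_imageI)
    show "inj_on (\<lambda>S. ?I \<union> S) (Pow ?G)"
      using G_sub unfolding inj_on_def by blast
    show "(\<lambda>S. ?I \<union> S) ` Pow ?G = {T \<in> Pow {1..?n}. \<phi> \<in> occurrences_within u ({0..?k} - R) w T}"
    proof (intro equalityI subsetI)
      fix T assume "T \<in> (\<lambda>S. ?I \<union> S) ` Pow ?G"
      then obtain S where S: "S \<subseteq> ?G" and T: "T = ?I \<union> S"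
        by blast
      have "gap \<phi> ?k ?n j \<inter> T = {}" if "j \<in> {0..?k} - R" for j
        using G_avoid[OF that] gap_disjoint_image[OF inc, of j] that S T by auto
      moreover have "T \<subseteq> {1..?n}"
        using G_sub S T incr_maps_range[OF inc] by blast
      ultimately show "T \<in> {T \<in> Pow {1..?n}. \<phi> \<in> occurrences_within u ({0..?k} - R) w T}"
        using \<phi> T by (simp add: occurrences_within_def)
    next
      fix T assume "T \<in> {T \<in> Pow {1..?n}. \<phi> \<in> occurrences_within u ({0..?k} - R) w T}"
      then have T: "T \<subseteq> {1..?n}" "?I \<subseteq> T"
        and avoid: "\<forall>j\<in>{0..?k} - R. gap \<phi> ?k ?n j \<inter> T = {}"
        by (auto simp: occurrences_within_def)
      have "T - ?I \<subseteq> ?G"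
      proof
        fix x assume x: "x \<in> T - ?I"
        then obtain j where "j \<le> ?k" "x \<in> gap \<phi> ?k ?n j"
          using T complement_image_eq_gaps[OF inc] by blast
        then show "x \<in> ?G"
          using avoid x by auto
      qed
      then show "T \<in> (\<lambda>S. ?I \<union> S) ` Pow ?G"
        using T by (intro image_eqI[of _ _ "T - ?I"]) auto
    qed
  qed
qed

lemma sum_sign_positions_containing_occurrence:
  assumes R: "R \<subseteq> {0..length u}" and \<phi>: "\<phi> \<in> occurrences u {} w"
  shows "(\<Sum>T | T \<in> Pow {1..length w} \<and> \<phi> \<in> occurrences_within u ({0..length u} - R) w T.
            (-1::int) ^ (card T - length u)) = (if \<phi> \<in> occurrences u R w then 1 else 0)"
proof -
  let ?k = "length u" and ?n = "length w"
  let ?I = "\<phi> ` {1..?k}" and ?G = "\<Union>i\<in>R. gap \<phi> ?k ?n i"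
  have inc: "\<phi> \<in> incr_maps ?k ?n"
    using \<phi> by (simp add: occurrences_iff)
  have G_sub: "?G \<subseteq> {1..?n} - ?I"
    using gaps_subset_complement_image[OF inc R] .
  have card_I: "card ?I = ?k"
    using card_image[OF strict_mono_on_imp_inj_on[OF incr_maps_strict_mono[OF inc]]] by simp
  have "(\<Sum>T | T \<in> Pow {1..?n} \<and> \<phi> \<in> occurrences_within u ({0..?k} - R) w T. (-1::int) ^ (card T - ?k))
        = (\<Sum>S\<in>Pow ?G. (-1) ^ (card (?I \<union> S) - ?k))"
    by (rule sum.reindex_bij_betw[OF bij_betw_positions_containing_occurrence[OF R \<phi>], symmetric])
  also have "\<dots> = (\<Sum>S\<in>Pow ?G. (-1) ^ card S)"
  proof (rule sum.cong[OF refl])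
    fix S assume "S \<in> Pow ?G"
    then have "?I \<inter> S = {}" "finite S"
      using G_sub finite_subset[of S "{1..?n}"] by auto
    then show "(-1::int) ^ (card (?I \<union> S) - ?k) = (-1) ^ card S"
      using card_I by (simp add: card_Un_disjoint)
  qed
  also have "\<dots> = (if ?G = {} then 1 else 0)"
    using G_sub finite_subset[of ?G "{1..?n}"] by (intro sum_Pow_neg_one_card) auto
  also have "?G = {} \<longleftrightarrow> (\<forall>i\<in>R. gap \<phi> ?k ?n i = {})"
    by blast
  also have "\<dots> \<longleftrightarrow> (\<forall>i\<in>R. ext_occ \<phi> ?k ?n (i + 1) = ext_occ \<phi> ?k ?n i + 1)"
    using R by (intro ball_cong[OF refl] gap_eq_empty_iff[OF inc]) auto
  also have "\<dots> \<longleftrightarrow> \<phi> \<in> occurrences u R w"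
    using \<phi> by (simp add: occurrences_iff)
  finally show ?thesis .
qed

lemma pbinom_eq_alternating_sum:
  assumes R: "R \<subseteq> {0..length u}"
  shows "int (pbinom w u R) = (\<Sum>T\<in>Pow {1..length w}.
           (-1) ^ (card T - length u) * int (pbinom (subword w T) u ({0..length u} - R)))"
proof -
  let ?k = "length u" and ?n = "length w" and ?O = "occurrences u {} w"
  let ?R' = "{0..?k} - R" and ?s = "\<lambda>T. (-1::int) ^ (card T - ?k)"
  have "(\<Sum>T\<in>Pow {1..?n}. ?s T * int (pbinom (subword w T) u ?R'))
      = (\<Sum>T\<in>Pow {1..?n}. \<Sum>\<phi>\<in>?O. if \<phi> \<in> occurrences_within u ?R' w T then ?s T else 0)"
  proof (rule sum.cong[OF refl])
    fix T assume "T \<in> Pow {1..?n}"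
    then have "pbinom (subword w T) u ?R' = card (occurrences_within u ?R' w T)"
      by (intro pbinom_subword) auto
    moreover have "occurrences_within u ?R' w T \<subseteq> ?O"
      by (auto simp: occurrences_within_def)
    ultimately show "?s T * int (pbinom (subword w T) u ?R')
        = (\<Sum>\<phi>\<in>?O. if \<phi> \<in> occurrences_within u ?R' w T then ?s T else 0)"
      by (simp add: sum.inter_restrict[OF finite_occurrences, symmetric] Int_absorb1)
  qed
  also have "\<dots> = (\<Sum>\<phi>\<in>?O. \<Sum>T\<in>Pow {1..?n}. if \<phi> \<in> occurrences_within u ?R' w T then ?s T else 0)"
    by (rule sum.swap)
  also have "\<dots> = (\<Sum>\<phi>\<in>?O. if \<phi> \<in> occurrences u R w then 1 else 0)"
  proof (rule sum.cong[OF refl])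
    fix \<phi> assume \<phi>: "\<phi> \<in> ?O"
    have "(\<Sum>T\<in>Pow {1..?n}. if \<phi> \<in> occurrences_within u ?R' w T then ?s T else 0)
        = (\<Sum>T | T \<in> Pow {1..?n} \<and> \<phi> \<in> occurrences_within u ?R' w T. ?s T)"
      by (rule sum.inter_filter[symmetric]) simp
    also have "\<dots> = (if \<phi> \<in> occurrences u R w then 1 else 0)"
      by (rule sum_sign_positions_containing_occurrence[OF R \<phi>])
    finally show "(\<Sum>T\<in>Pow {1..?n}. if \<phi> \<in> occurrences_within u ?R' w T then ?s T else 0)
        = (if \<phi> \<in> occurrences u R w then 1 else 0)" .
  qed
  also have "\<dots> = int (pbinom w u R)"
  proof -
    have "occurrences u R w \<subseteq> ?O"
      by (auto simp: occurrences_iff)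
    then show ?thesis
      by (simp add: pbinom_def sum.inter_restrict[OF finite_occurrences, symmetric] Int_absorb1)
  qed
  finally show ?thesis ..
qed

lemma sum_wbinom_eq_sum_subwords:
  fixes w :: "'a::finite list" and f :: "'a list \<Rightarrow> int"
  shows "(\<Sum>v | length v \<le> length w. f v * int (wbinom w v)) = (\<Sum>T\<in>Pow {1..length w}. f (subword w T))"
proof -
  have "(\<Sum>v | length v \<le> length w. f v * int (wbinom w v))
      = (\<Sum>v | length v \<le> length w. \<Sum>T | T \<in> Pow {1..length w} \<and> subword w T = v. f (subword w T))"
    by (rule sum.cong[OF refl]) (simp add: wbinom_eq_card_positions)
  also have "\<dots> = (\<Sum>T\<in>Pow {1..length w}. f (subword w T))"
  proof (rule sum.group)
    show "finite {v :: 'a list. length v \<le> length w}"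
      using finite_lists_length_le[of "UNIV :: 'a set" "length w"] by simp
    show "subword w ` Pow {1..length w} \<subseteq> {v. length v \<le> length w}"
      using card_mono[of "{1..length w}"] by auto
  qed simp
  finally show ?thesis .
qed

theorem mainTheorem8:
  fixes u w :: "('a::finite) list" and R :: "nat set"
  assumes "R \<subseteq> {0..length u}"
  defines "t \<equiv> (\<lambda>v::'a list. (-1::int) ^ (length v - length u)
                   * int (pbinom v u ({0..length u} - R)) * int (wbinom w v))"
  shows "finite {v. t v \<noteq> 0} \<and> int (pbinom w u R) = (\<Sum>v\<in>{v. t v \<noteq> 0}. t v)"
proof
  let ?W = "{v :: 'a list. length v \<le> length w}"
  have support: "{v. t v \<noteq> 0} \<subseteq> ?W"
    using length_le_if_wbinom_nonzero by (fastforce simp: t_def)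
  have "finite ?W"
    using finite_lists_length_le[of "UNIV :: 'a set" "length w"] by simp
  then show "finite {v. t v \<noteq> 0}"
    using support by (rule finite_subset[rotated])
  have "(\<Sum>v\<in>{v. t v \<noteq> 0}. t v) = (\<Sum>v\<in>?W. t v)"
    using \<open>finite ?W\<close> support by (intro sum.mono_neutral_left) auto
  also have "\<dots> = (\<Sum>T\<in>Pow {1..length w}.
      (-1) ^ (card T - length u) * int (pbinom (subword w T) u ({0..length u} - R)))"
    unfolding t_def
    using sum_wbinom_eq_sum_subwords[of "\<lambda>v. (-1) ^ (length v - length u) * int (pbinom v u ({0..length u} - R))"]
    by simp
  also have "\<dots> = int (pbinom w u R)"
    by (rule pbinom_eq_alternating_sum[OF assms(1), symmetric])
  finally show "int (pbinom w u R) = (\<Sum>v\<in>{v. t v \<noteq> 0}. t v)" ..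
qed

end
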